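(* Let $K\ge1$, $p_D\in(0,1]$, $p^+\in(0,1)$, and let $\varphi^\pm=(\varphi^\pm_y)_{y\in[K]}$ be fixed probability vectors with $\varphi^-_y>0$ for all $y$. For unknowns $(q_y,q_y^+)_y$ define \[ \Delta\mathrm{s.p.}(\hat y)=\frac{p_D}{p^+(1-p^+)}\Bigl(\varphi^+_{\hat y}(p^+-q^+)-(q_{\hat y}p^+-q^+_{\hat y})\Bigr)+(\varphi^+_{\hat y}-\varphi^-_{\hat y})\Bigl(1-p_D\frac{1-q^+}{1-p^+}\Bigr),\quad q^+=\sum_yq_y^+. \] If $p_D\ge(1-p^+)\max_y\frac{\varphi^-_y-\varphi^+_y}{\varphi^-_y}$, then there exist $(q_y,q_y^+)_y$ with $\sum_yq_y=1$ and $0\le q_y^+\le q_y$ for all $y$ such that $\Delta\mathrm{s.p.}(\hat y)=0$ for all $\hat y\in[K]$.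
   Context: Interpretation: $p_D=\mathbb{P}(D=1)$ is the memorized mass, $p^+=\mathbb{P}(A=1)$, $q_y=\mathbb{P}(Y=y\mid D=1)$, $q^+_y=\mathbb{P}(Y=y,A=1\mid D=1)$, $\varphi^\pm_y$ the prediction rates of the base classifier on the unmemorized part in group $A=1$ resp. $A=0$; the formula is the statistical parity gap of the memorizing classifier, with $\varphi^\pm$ treated as fixed parameters. *)

theory Defs
  imports Complex_Main
begin

(* [K] is rendered as {..<K} = {0,...,K-1}. *)

definition prob_vec :: "nat \<Rightarrow> (nat \<Rightarrow> real) \<Rightarrow> bool" where
  "prob_vec K \<phi> \<longleftrightarrow> (\<forall>y<K. 0 \<le> \<phi> y) \<and> (\<Sum>y<K. \<phi> y) = 1"

definition delta_sp ::
  "nat \<Rightarrow> real \<Rightarrow> real \<Rightarrow> (nat \<Rightarrow> real) \<Rightarrow> (nat \<Rightarrow> real)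
    \<Rightarrow> (nat \<Rightarrow> real) \<Rightarrow> (nat \<Rightarrow> real) \<Rightarrow> nat \<Rightarrow> real" where
  "delta_sp K pD pp phip phim q qp yh =
     (let Qp = (\<Sum>y<K. qp y) in
      pD / (pp * (1 - pp)) * (phip yh * (pp - Qp) - (q yh * pp - qp yh))
      + (phip yh - phim yh) * (1 - pD * (1 - Qp) / (1 - pp)))"

end

theory Submission
  imports Defs
begin

text \<open>Put all memorized mass into group \<open>A = 0\<close>, i.e. \<open>q\<^sup>+ = 0\<close>. Then every gap
  \<open>\<Delta>s.p.(\<^bold>y)\<close> is affine in \<open>q\<^bsub>\<^bold>y\<^esub>\<close> alone and vanishes for
  \<open>q\<^sub>y = \<phi>\<^sup>+\<^sub>y + (\<phi>\<^sup>+\<^sub>y - \<phi>\<^sup>-\<^sub>y)(1 - p\<^sup>+ - p\<^sub>D)/p\<^sub>D\<close>. These \<open>q\<^sub>y\<close> sum to 1 because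
  \<open>\<phi>\<^sup>+\<close> and \<open>\<phi>\<^sup>-\<close> do, and \<open>q\<^sub>y \<ge> 0\<close> is exactly the hypothesis on \<open>p\<^sub>D\<close> at class \<open>y\<close>.\<close>

definition balancing_q :: "real \<Rightarrow> real \<Rightarrow> (nat \<Rightarrow> real) \<Rightarrow> (nat \<Rightarrow> real) \<Rightarrow> nat \<Rightarrow> real" where
  "balancing_q pD pp phip phim y = phip y + (phip y - phim y) * (1 - pp - pD) / pD"

lemma sum_balancing_q:
  assumes "(\<Sum>y<K. phip y) = 1" and "(\<Sum>y<K. phim y) = 1"
  shows "(\<Sum>y<K. balancing_q pD pp phip phim y) = 1"
proof -
  have "(\<Sum>y<K. balancing_q pD pp phip phim y)
      = (\<Sum>y<K. phip y) + ((\<Sum>y<K. phip y) - (\<Sum>y<K. phim y)) * (1 - pp - pD) / pD"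
    unfolding balancing_q_def
    by (simp add: sum.distrib sum_subtractf sum_divide_distrib[symmetric]
        sum_distrib_right[symmetric])
  with assms show ?thesis by simp
qed

lemma balancing_q_nonneg_iff:
  assumes "0 < pD" and "0 < phim y"
  shows "0 \<le> balancing_q pD pp phip phim y \<longleftrightarrow> (1 - pp) * ((phim y - phip y) / phim y) \<le> pD"
proof -
  have "pD * balancing_q pD pp phip phim y = pD * phim y - (1 - pp) * (phim y - phip y)"
    unfolding balancing_q_def using assms(1) by (simp add: field_simps)
  then have "0 \<le> balancing_q pD pp phip phim y \<longleftrightarrow> (1 - pp) * (phim y - phip y) \<le> pD * phim y"
    using assms(1) by (smt (verit) zero_le_mult_iff)
  also have "\<dots> \<longleftrightarrow> (1 - pp) * ((phim y - phip y) / phim y) \<le> pD"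
    using assms(2) by (simp add: field_simps)
  finally show ?thesis .
qed

lemma delta_sp_balancing_q:
  assumes "pD \<noteq> 0" and "pp \<noteq> 0" and "pp \<noteq> 1"
  shows "delta_sp K pD pp phip phim (balancing_q pD pp phip phim) (\<lambda>_. 0) yh = 0"
  unfolding delta_sp_def balancing_q_def Let_def using assms
  by (simp add: field_simps)

theorem corollary10:
  fixes K :: nat and pD pp :: real and phip phim :: "nat \<Rightarrow> real"
  assumes "K \<ge> 1"
    and "0 < pD" and "pD \<le> 1"
    and "0 < pp" and "pp < 1"
    and "prob_vec K phip" and "prob_vec K phim"
    and "\<forall>y<K. phim y > 0"
    and "pD \<ge> (1 - pp) * (MAX y\<in>{..<K}. (phim y - phip y) / phim y)"
  shows "\<exists>q qp :: nat \<Rightarrow> real. (\<Sum>y<K. q y) = 1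
           \<and> (\<forall>y<K. 0 \<le> qp y \<and> qp y \<le> q y)
           \<and> (\<forall>yh<K. delta_sp K pD pp phip phim q qp yh = 0)"
proof -
  let ?q = "balancing_q pD pp phip phim"
  have sum_q: "(\<Sum>y<K. ?q y) = 1"
    using assms(6,7) by (intro sum_balancing_q) (auto simp: prob_vec_def)
  have q_nonneg: "0 \<le> ?q y" if "y < K" for y
  proof -
    have "(phim y - phip y) / phim y \<le> (MAX y\<in>{..<K}. (phim y - phip y) / phim y)"
      using \<open>y < K\<close> by (intro Max_ge) auto
    then have "(1 - pp) * ((phim y - phip y) / phim y) \<le> pD"
      using assms(5,9) by (smt (verit) mult_left_mono)
    then show ?thesis
      using balancing_q_nonneg_iff assms(2,8) \<open>y < K\<close> by blast
  qed
  have "delta_sp K pD pp phip phim ?q (\<lambda>_. 0) yh = 0" for yh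
    using assms(2,4,5) by (intro delta_sp_balancing_q) auto
  with sum_q q_nonneg show ?thesis
    by (intro exI[of _ ?q] exI[of _ "\<lambda>_. 0"]) auto
qed

end
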